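(* Let $(G,c,(k_i)_{i=1}^t)$ be an instance of \textsc{$\mathbb{T}$-Fair Feedback Vertex Set} and let $n_i=c_i(V(G))$. Let $G'$ be the graph with $V(G')=V(G)\cup\{v_0\}$ and $E(G')=E(G)\cup E_0$, where $v_0\notin V(G)$ and $E_0=\{vv_0 : v\in V(G)\}$. Let $c':V(G')\to 2^{[t]}\setminus\{\emptyset\}$ be given by $c'(v_0)=[t]$ and $c'(v)=c(v)$ for $v\in V(G)$. Then $G$ has a $(k_i)_{i=1}^t$-fair feedback vertex set if and only if there exists a pair $(X,X_0)$ such that (a) $X\subseteq V(G)\cup\{v_0\}$ with $v_0\in X$ and $X_0\subseteq E_0$; (b) the subgraph of $G'$ with vertex set $X$ and edge set $E_{G'}[X\setminus\{v_0\}]\cup X_0$ is connected; (c) $|E_{G'}[X\setminus\{v_0\}]\cup X_0|=|X|-1$; and (d) $c'_i(X)=n_i-k_i+1$ for every $i\in[t]$.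
   Context: $[t]=\{1,\dots,t\}$. A $t$-coloured graph is $(G,c)$ with $c:V(G)\to 2^{[t]}\setminus\{\emptyset\}$; for $S$ a vertex set, $c_i(S)=|\{v\in S: i\in c(v)\}|$ (similarly $c'_i$ for $c'$). A set $F\subseteq V(G)$ is a $(k_i)_{i=1}^t$-fair feedback vertex set if $G-F$ is acyclic and $c_i(F)=k_i$ for every $i$. For $Y\subseteq V(G')$, $E_{G'}[Y]$ denotes the set of edges of $G'$ with both endpoints in $Y$. *)

theory Defs
  imports Main
begin

definition simple_graph :: "'a set \<Rightarrow> 'a set set \<Rightarrow> bool" where
  "simple_graph V E \<longleftrightarrow> finite V \<and> (\<forall>e\<in>E. \<exists>u v. u \<noteq> v \<and> u \<in> V \<and> v \<in> V \<and> e = {u, v})"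

definition is_cycle :: "'a set set \<Rightarrow> 'a list \<Rightarrow> bool" where
  "is_cycle E xs \<longleftrightarrow> length xs \<ge> 3 \<and> distinct xs \<and>
     (\<forall>i < length xs. {xs ! i, xs ! ((i + 1) mod length xs)} \<in> E)"

definition is_forest :: "'a set \<Rightarrow> 'a set set \<Rightarrow> bool" where
  "is_forest V E \<longleftrightarrow> \<not> (\<exists>xs. set xs \<subseteq> V \<and> is_cycle E xs)"

definition induced_edges :: "'a set set \<Rightarrow> 'a set \<Rightarrow> 'a set set" where
  "induced_edges E Y = {e \<in> E. e \<subseteq> Y}"

definition graph_connected :: "'a set \<Rightarrow> 'a set set \<Rightarrow> bool" where
  "graph_connected V E \<longleftrightarrow> (\<forall>u\<in>V. \<forall>v\<in>V. (u, v) \<in> {(x, y). {x, y} \<in> E}\<^sup>*)"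

definition t_colouring :: "'a set \<Rightarrow> nat \<Rightarrow> ('a \<Rightarrow> nat set) \<Rightarrow> bool" where
  "t_colouring V t c \<longleftrightarrow> (\<forall>v\<in>V. c v \<subseteq> {1..t} \<and> c v \<noteq> {})"

definition ccount :: "('a \<Rightarrow> nat set) \<Rightarrow> nat \<Rightarrow> 'a set \<Rightarrow> nat" where
  "ccount c i S = card {v \<in> S. i \<in> c v}"

definition fair_fvs :: "'a set \<Rightarrow> 'a set set \<Rightarrow> ('a \<Rightarrow> nat set) \<Rightarrow> nat \<Rightarrow> (nat \<Rightarrow> nat) \<Rightarrow> 'a set \<Rightarrow> bool" where
  "fair_fvs V E c t k F \<longleftrightarrow> F \<subseteq> V \<and> is_forest (V - F) (induced_edges E (V - F)) \<and>
     (\<forall>i\<in>{1..t}. ccount c i F = k i)"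

end

(* Write W = V - F. As c'(v0) = [t], condition (d) says exactly that F has colour counts k, so
   the statement reduces to: G[W] is a forest iff G[W] together with some set X0 of hub edges
   {w, v0} is connected on W + v0 and has |W| edges.

   If every vertex of W reaches a root r outside W in a finite graph K, then |W| <= |K|: sending
   x to the first edge {x, p x} of a shortest path to r is injective, because p x is strictly
   closer to r. If K also contains a cycle, deleting one cycle edge preserves connectivity, so
   |W| < |K|. Hence a connected hub extension with |W| edges has no cycle.

   Conversely, a forest on W is completed edge by edge, starting from the full star at r: an
   edge uv of the forest joins two components, which reach r through distinct hub edges {w, r}
   and {w', r}; after adding uv one of them is redundant and is dropped. *)

theory Submission
  imports Defs "HOL-Library.Transitive_Closure_Table"
begin

definition adj :: "'a set set \<Rightarrow> 'a \<Rightarrow> 'a \<Rightarrow> bool" where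
  "adj K x y \<longleftrightarrow> {x, y} \<in> K"

definition star :: "'a \<Rightarrow> 'a set \<Rightarrow> 'a set set" where
  "star r W = (\<lambda>w. {w, r}) ` W"

lemma graph_connected_iff_adj: "graph_connected V K \<longleftrightarrow> (\<forall>u\<in>V. \<forall>v\<in>V. (adj K)\<^sup>*\<^sup>* u v)"
  by (simp add: graph_connected_def rtranclp_rtrancl_eq adj_def)

lemma symp_adj: "symp (adj K)"
  by (simp add: symp_def adj_def insert_commute)

lemma adj_rtranclp_sym: "(adj K)\<^sup>*\<^sup>* x y \<Longrightarrow> (adj K)\<^sup>*\<^sup>* y x"
  by (rule sympD[OF symp_rtranclp[OF symp_adj]])

lemma adj_rtranclp_mono:
  assumes "H \<subseteq> K" and "(adj H)\<^sup>*\<^sup>* x y"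
  shows "(adj K)\<^sup>*\<^sup>* x y"
proof -
  have "adj H \<le> adj K" using assms(1) by (auto simp: adj_def)
  then show ?thesis using assms(2) rtranclp_mono by blast
qed

lemma graph_connected_insert_root_iff:
  "graph_connected (insert r W) K \<longleftrightarrow> (\<forall>x\<in>W. (adj K)\<^sup>*\<^sup>* x r)"
  by (auto simp: graph_connected_iff_adj intro: rtranclp_trans adj_rtranclp_sym)

lemma adj_rtranclp_insert_redundant:
  assumes "(adj K)\<^sup>*\<^sup>* a b" and "(adj (insert {a, b} K))\<^sup>*\<^sup>* x y"
  shows "(adj K)\<^sup>*\<^sup>* x y"
  using assms(2)
proof (induction rule: rtranclp_induct)
  case (step y z)
  have "(adj K)\<^sup>*\<^sup>* y z"
  proof (cases "{y, z} = {a, b}")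
    case True
    then show ?thesis
      using assms(1) adj_rtranclp_sym by (auto simp: doubleton_eq_iff)
  next
    case False
    then show ?thesis using step.hyps(2) by (auto simp: adj_def)
  qed
  with step.IH show ?case by (rule rtranclp_trans)
qed simp

lemma chain_imp_adj_rtranclp:
  assumes "\<And>j. j < m \<Longrightarrow> {f j, f (Suc j)} \<in> K"
  shows "(adj K)\<^sup>*\<^sup>* (f 0) (f m)"
  using assms by (induction m) (auto simp: adj_def intro: rtranclp.rtrancl_into_rtrancl)

lemma is_cycle_vertices: "is_cycle K xs \<Longrightarrow> set xs \<subseteq> \<Union>K"
  unfolding is_cycle_def by (metis UnionI in_set_conv_nth insertI1 subsetI)

lemma is_cycle_mono: "H \<subseteq> K \<Longrightarrow> is_cycle H xs \<Longrightarrow> is_cycle K xs"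
  unfolding is_cycle_def by blast

lemma simple_graph_Union_subset: "simple_graph W H \<Longrightarrow> \<Union>H \<subseteq> W"
  unfolding simple_graph_def by auto

lemma simple_graph_finite_edges: "simple_graph W H \<Longrightarrow> finite H"
  by (meson finite_UnionD finite_subset simple_graph_Union_subset simple_graph_def)

lemma simple_graph_insert_edge: "simple_graph W (insert e H) \<Longrightarrow> simple_graph W H"
  unfolding simple_graph_def by blast

lemma is_forest_iff_no_cycle:
  assumes "simple_graph W H"
  shows "is_forest W H \<longleftrightarrow> (\<forall>xs. \<not> is_cycle H xs)"
  using simple_graph_Union_subset[OF assms] is_cycle_vertices unfolding is_forest_def by blast

lemma is_cycle_obtain_redundant_edge:
  assumes "is_cycle K xs"
  obtains e where "e \<in> K" "\<And>x y. (adj K)\<^sup>*\<^sup>* x y \<Longrightarrow> (adj (K - {e}))\<^sup>*\<^sup>* x y"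
proof -
  define n where "n = length xs"
  define e where "e = {xs ! (n - 1), xs ! 0}"
  have n: "3 \<le> n" and dist: "distinct xs"
    and edges: "\<And>i. i < n \<Longrightarrow> {xs ! i, xs ! ((i + 1) mod n)} \<in> K"
    using assms unfolding is_cycle_def n_def by auto
  have "e \<in> K" using edges[of "n - 1"] n by (simp add: e_def insert_commute)
  have index_eq: "a = b" if "a < n" "b < n" "xs ! a = xs ! b" for a b
    using that dist nth_eq_iff_index_eq unfolding n_def by blast
  have "{xs ! j, xs ! Suc j} \<in> K - {e}" if "j < n - 1" for j
  proof -
    have bounds: "j < n" "Suc j < n" "n - 1 < n" "0 < n" using that n by auto
    have "xs ! j \<noteq> xs ! (n - 1)" using that index_eq[OF bounds(1,3)] by auto
    moreover have "xs ! Suc j \<noteq> xs ! (n - 1)" if "xs ! j = xs ! 0"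
      using \<open>j < n - 1\<close> n index_eq[OF bounds(1,4)] index_eq[OF bounds(2,3)] that by auto
    ultimately have "{xs ! j, xs ! Suc j} \<noteq> e" by (auto simp: e_def doubleton_eq_iff)
    then show ?thesis using edges[of j] that by simp
  qed
  then have reach: "(adj (K - {e}))\<^sup>*\<^sup>* (xs ! 0) (xs ! (n - 1))"
    by (rule chain_imp_adj_rtranclp[where f = "(!) xs"])
  have K: "insert {xs ! 0, xs ! (n - 1)} (K - {e}) = K"
    using \<open>e \<in> K\<close> by (auto simp: e_def insert_commute)
  have "(adj (K - {e}))\<^sup>*\<^sup>* x y" if "(adj K)\<^sup>*\<^sup>* x y" for x y
    using adj_rtranclp_insert_redundant[OF reach, of x y] that K by simp
  with \<open>e \<in> K\<close> show thesis by (rule that)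
qed

lemma adj_rtranclp_obtain_cycle:
  assumes "(adj H)\<^sup>*\<^sup>* u v" "u \<noteq> v" "{u, v} \<notin> H"
  obtains xs where "is_cycle (insert {u, v} H) xs"
proof -
  obtain ys where "rtrancl_path (adj H) u ys v"
    using assms(1) rtranclp_eq_rtrancl_path by metis
  then obtain ys where path: "rtrancl_path (adj H) u ys v" and dist: "distinct (u # ys)"
    using rtrancl_path_distinct by metis
  define xs where "xs = u # ys"
  have last: "last ys = v" and "ys \<noteq> []"
    using path assms(2) rtrancl_path_last by (fastforce elim: rtrancl_path.cases)+
  have step: "adj H (xs ! j) (xs ! Suc j)" if "j < length ys" for j
    using rtrancl_path_nth[OF path that] by (simp add: xs_def)
  have "length ys \<noteq> 1"
    using step[of 0] last assms(3) by (auto simp: adj_def length_Suc_conv xs_def)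
  then have len: "3 \<le> length xs" using \<open>ys \<noteq> []\<close> unfolding xs_def by (cases ys) (auto simp: Suc_le_eq)
  have "{xs ! i, xs ! ((i + 1) mod length xs)} \<in> insert {u, v} H" if "i < length xs" for i
  proof (cases "Suc i < length xs")
    case True
    then show ?thesis using step[of i] by (simp add: xs_def adj_def)
  next
    case False
    then have i: "i = length ys" using that by (simp add: xs_def)
    then have "(i + 1) mod length xs = 0" by (simp add: xs_def)
    then show ?thesis
      using i last \<open>ys \<noteq> []\<close> by (simp add: xs_def last_conv_nth nth_Cons' insert_commute)
  qed
  then have "is_cycle (insert {u, v} H) xs" using len dist by (simp add: is_cycle_def xs_def)
  then show thesis by (rule that)
qed

lemma card_le_card_edges_if_reaches_root:
  assumes "finite K" "r \<notin> W" "\<forall>x\<in>W. (adj K)\<^sup>*\<^sup>* x r"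
  shows "card W \<le> card K"
proof -
  define d where "d x = (LEAST n. (adj K ^^ n) x r)" for x
  have "\<exists>p. adj K x p \<and> d p < d x" if "x \<in> W" for x
  proof -
    have "(adj K ^^ d x) x r"
      unfolding d_def using assms(3) that rtranclp_imp_relpowp by (metis LeastI)
    moreover have "d x \<noteq> 0" using calculation assms(2) that by (metis relpowp_0_E)
    ultimately obtain m p where "d x = Suc m" "adj K x p" "(adj K ^^ m) p r"
      by (metis not0_implies_Suc relpowp_Suc_D2)
    moreover have "d p \<le> m" using calculation(3) unfolding d_def by (rule Least_le)
    ultimately show ?thesis by auto
  qed
  then obtain p where p: "\<And>x. x \<in> W \<Longrightarrow> adj K x (p x) \<and> d (p x) < d x" by metis
  have "inj_on (\<lambda>x. {x, p x}) W"
  proof (rule inj_onI)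
    fix x y assume "x \<in> W" "y \<in> W" "{x, p x} = {y, p y}"
    then show "x = y" using p[of x] p[of y] by (auto simp: doubleton_eq_iff)
  qed
  moreover have "(\<lambda>x. {x, p x}) ` W \<subseteq> K" using p by (auto simp: adj_def)
  ultimately show ?thesis using assms(1) by (rule card_inj_on_le)
qed

lemma card_less_card_edges_if_reaches_root_cycle:
  assumes "finite K" "r \<notin> W" "\<forall>x\<in>W. (adj K)\<^sup>*\<^sup>* x r" "is_cycle K xs"
  shows "card W < card K"
proof -
  obtain e where "e \<in> K" and e: "\<And>x y. (adj K)\<^sup>*\<^sup>* x y \<Longrightarrow> (adj (K - {e}))\<^sup>*\<^sup>* x y"
    using is_cycle_obtain_redundant_edge[OF assms(4)] by blast
  have "card W \<le> card (K - {e})"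
    using assms(1-3) e by (intro card_le_card_edges_if_reaches_root) auto
  also have "\<dots> < card K" using assms(1) \<open>e \<in> K\<close> by (rule card_Diff1_less)
  finally show ?thesis .
qed

lemma star_finite: "finite W \<Longrightarrow> finite (star r W)"
  by (simp add: star_def)

lemma card_star: "r \<notin> W \<Longrightarrow> card (star r W) = card W"
  unfolding star_def by (rule card_image) (auto simp: inj_on_def doubleton_eq_iff)

lemma reaches_root_through_star_edge:
  assumes "X0 \<subseteq> star r W" "(adj (H \<union> X0))\<^sup>*\<^sup>* u r" "r \<notin> \<Union>H" "r \<notin> W" "u \<noteq> r"
  obtains w where "(adj H)\<^sup>*\<^sup>* u w" "{w, r} \<in> X0"
proof -
  have "((adj H)\<^sup>*\<^sup>* u z \<and> z \<noteq> r) \<or> (\<exists>w. (adj H)\<^sup>*\<^sup>* u w \<and> {w, r} \<in> X0)"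
    if "(adj (H \<union> X0))\<^sup>*\<^sup>* u z" for z
    using that
  proof (induction rule: rtranclp_induct)
    case (step y z)
    show ?case
    proof (cases "(adj H)\<^sup>*\<^sup>* u y \<and> y \<noteq> r")
      case True
      show ?thesis
      proof (cases "{y, z} \<in> H")
        case True
        then have "z \<noteq> r" "adj H y z" using assms(3) by (auto simp: adj_def)
        with \<open>(adj H)\<^sup>*\<^sup>* u y \<and> y \<noteq> r\<close> show ?thesis
          by (auto intro: rtranclp.rtrancl_into_rtrancl)
      next
        case False
        then have "{y, z} \<in> X0" using step.hyps(2) by (simp add: adj_def)
        moreover obtain w where "w \<in> W" "{y, z} = {w, r}"
          using calculation assms(1) by (auto simp: star_def)
        ultimately show ?thesis
          using \<open>(adj H)\<^sup>*\<^sup>* u y \<and> y \<noteq> r\<close> by (auto simp: doubleton_eq_iff)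
      qed
    qed (use step.IH in blast)
  qed (use assms(5) in simp)
  then show thesis using assms(2) that by blast
qed

lemma star_edge_exchange:
  assumes X0: "X0 \<subseteq> star r W" "\<forall>x\<in>W. (adj (H \<union> X0))\<^sup>*\<^sup>* x r"
    and r: "r \<notin> \<Union>H" "r \<notin> W"
    and uv: "u \<in> W" "v \<in> W" "\<not> (adj H)\<^sup>*\<^sup>* u v"
  obtains w where "{w, r} \<in> X0" "\<forall>x\<in>W. (adj (insert {u, v} H \<union> (X0 - {{w, r}})))\<^sup>*\<^sup>* x r"
proof -
  obtain w where w: "(adj H)\<^sup>*\<^sup>* u w" "{w, r} \<in> X0"
    using reaches_root_through_star_edge[OF X0(1) X0(2)[rule_format, OF uv(1)] r] uv(1) r(2) by blast
  obtain w' where w': "(adj H)\<^sup>*\<^sup>* v w'" "{w', r} \<in> X0"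
    using reaches_root_through_star_edge[OF X0(1) X0(2)[rule_format, OF uv(2)] r] uv(2) r(2) by blast
  have "w \<noteq> w'"
    using w(1) w'(1) uv(3) by (metis adj_rtranclp_sym rtranclp_trans)
  define S where "S = insert {u, v} H \<union> (X0 - {{w, r}})"
  have "(adj S)\<^sup>*\<^sup>* w r"
  proof -
    have HS: "H \<subseteq> S" by (auto simp: S_def)
    have "(adj S)\<^sup>*\<^sup>* w u" "(adj S)\<^sup>*\<^sup>* v w'"
      using adj_rtranclp_mono[OF HS] adj_rtranclp_sym[OF w(1)] w'(1) by auto
    moreover have "adj S u v" "adj S w' r"
      using w'(2) \<open>w \<noteq> w'\<close> by (auto simp: S_def adj_def doubleton_eq_iff)
    ultimately show ?thesis by (meson rtranclp.rtrancl_into_rtrancl rtranclp_trans)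
  qed
  moreover have "H \<union> X0 \<subseteq> insert {w, r} S" by (auto simp: S_def)
  ultimately have "\<forall>x\<in>W. (adj S)\<^sup>*\<^sup>* x r"
    using X0(2) adj_rtranclp_mono adj_rtranclp_insert_redundant by metis
  with w(2) show thesis unfolding S_def by (rule that)
qed

lemma star_completion_of_forest:
  assumes "simple_graph W H" "\<forall>xs. \<not> is_cycle H xs" "r \<notin> W"
  shows "\<exists>X0 \<subseteq> star r W. (\<forall>x\<in>W. (adj (H \<union> X0))\<^sup>*\<^sup>* x r) \<and> card H + card X0 = card W"
  using simple_graph_finite_edges[OF assms(1)] assms(1,2)
proof (induction H rule: finite_induct)
  case empty
  have "(adj (star r W))\<^sup>*\<^sup>* x r" if "x \<in> W" for x
    using that by (auto simp: star_def adj_def)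
  then show ?case using card_star[OF assms(3)] by auto
next
  case (insert e H)
  obtain u v where uv: "u \<noteq> v" "u \<in> W" "v \<in> W" "e = {u, v}"
    using insert.prems(1) unfolding simple_graph_def by blast
  have H: "simple_graph W H" "\<forall>xs. \<not> is_cycle H xs"
    using insert.prems simple_graph_insert_edge is_cycle_mono[of H "insert e H"] by blast+
  obtain X0 where X0: "X0 \<subseteq> star r W" "\<forall>x\<in>W. (adj (H \<union> X0))\<^sup>*\<^sup>* x r"
    "card H + card X0 = card W"
    using insert.IH[OF H] by blast
  have "\<not> (adj H)\<^sup>*\<^sup>* u v"
    using adj_rtranclp_obtain_cycle[of H u v] uv insert.hyps(2) insert.prems(2) by blast
  moreover have "r \<notin> \<Union>H" using simple_graph_Union_subset[OF H(1)] assms(3) by blast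
  ultimately obtain w where w: "{w, r} \<in> X0"
    and reach: "\<forall>x\<in>W. (adj (insert e H \<union> (X0 - {{w, r}})))\<^sup>*\<^sup>* x r"
    using star_edge_exchange[OF X0(1,2) _ assms(3) uv(2,3)] uv(4) by metis
  have "finite X0"
    using X0(1) star_finite simple_graph_def insert.prems(1) finite_subset by metis
  moreover have "card X0 > 0" using calculation w card_gt_0_iff by blast
  ultimately have "card (insert e H) + card (X0 - {{w, r}}) = card W"
    using X0(3) w insert.hyps by simp
  moreover have "X0 - {{w, r}} \<subseteq> star r W" using X0(1) by blast
  ultimately show ?case using reach by blast
qed

lemma is_forest_iff_star_spanning_tree:
  assumes "simple_graph W H" "r \<notin> W"
  shows "is_forest W H \<longleftrightarrow>
    (\<exists>X0 \<subseteq> star r W. graph_connected (insert r W) (H \<union> X0) \<and> card (H \<union> X0) = card W)"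
proof -
  have fin: "finite H" "finite (star r W)"
    using assms(1) by (simp_all add: simple_graph_finite_edges star_finite simple_graph_def)
  have disj: "H \<inter> star r W = {}"
    using simple_graph_Union_subset[OF assms(1)] assms(2) by (auto simp: star_def)
  show ?thesis
  proof
    assume "is_forest W H"
    then obtain X0 where X0: "X0 \<subseteq> star r W" "\<forall>x\<in>W. (adj (H \<union> X0))\<^sup>*\<^sup>* x r"
      "card H + card X0 = card W"
      using star_completion_of_forest assms is_forest_iff_no_cycle by metis
    have "card (H \<union> X0) = card H + card X0"
      using X0(1) fin disj by (intro card_Un_disjoint) (auto intro: finite_subset)
    then show "\<exists>X0 \<subseteq> star r W. graph_connected (insert r W) (H \<union> X0) \<and> card (H \<union> X0) = card W"
      using X0 graph_connected_insert_root_iff by metis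
  next
    assume "\<exists>X0 \<subseteq> star r W. graph_connected (insert r W) (H \<union> X0) \<and> card (H \<union> X0) = card W"
    then obtain X0 where X0: "X0 \<subseteq> star r W" "\<forall>x\<in>W. (adj (H \<union> X0))\<^sup>*\<^sup>* x r"
      "card (H \<union> X0) = card W"
      using graph_connected_insert_root_iff by metis
    have "finite (H \<union> X0)" using X0(1) fin finite_subset by blast
    then have "\<not> is_cycle H xs" for xs
      using card_less_card_edges_if_reaches_root_cycle[OF _ assms(2) X0(2)] X0(3)
        is_cycle_mono[of H "H \<union> X0"] by auto
    then show "is_forest W H" using is_forest_iff_no_cycle[OF assms(1)] by blast
  qed
qed

lemma simple_graph_induced_edges:
  assumes "simple_graph V E" "W \<subseteq> V"
  shows "simple_graph W (induced_edges E W)"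
proof -
  have "\<exists>u v. u \<noteq> v \<and> u \<in> W \<and> v \<in> W \<and> e = {u, v}" if e: "e \<in> E" "e \<subseteq> W" for e
  proof -
    obtain u v where "u \<noteq> v" "e = {u, v}" using assms(1) e(1) unfolding simple_graph_def by blast
    then show ?thesis using e(2) by auto
  qed
  then show ?thesis
    using assms finite_subset unfolding simple_graph_def induced_edges_def by auto
qed

lemma ccount_Diff:
  assumes "finite V" "W \<subseteq> V"
  shows "ccount c i V = ccount c i W + ccount c i (V - W)"
proof -
  have "{v \<in> V. i \<in> c v} = {v \<in> W. i \<in> c v} \<union> {v \<in> V - W. i \<in> c v}" using assms(2) by auto
  then show ?thesis
    unfolding ccount_def using assms by (simp add: card_Un_disjoint finite_subset disjoint_iff)
qed

lemma ccount_insert_fun_upd: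
  assumes "finite W" "v \<notin> W" "i \<in> C"
  shows "ccount (c(v := C)) i (insert v W) = Suc (ccount c i W)"
proof -
  have "{x \<in> insert v W. i \<in> (c(v := C)) x} = insert v {x \<in> W. i \<in> c x}" using assms(2,3) by auto
  then show ?thesis unfolding ccount_def using assms(1,2) by simp
qed

lemma ccount_complement_iff:
  assumes "finite V" "W \<subseteq> V" "v0 \<notin> V" "i \<in> {1..t}"
  shows "ccount c i (V - W) = k \<longleftrightarrow>
    int (ccount (c(v0 := {1..t})) i (insert v0 W)) = int (ccount c i V) - int k + 1"
proof -
  have "finite W" "v0 \<notin> W" using assms(1-3) finite_subset by auto
  then have "ccount (c(v0 := {1..t})) i (insert v0 W) = Suc (ccount c i W)"
    using assms(4) by (rule ccount_insert_fun_upd)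
  then show ?thesis using ccount_Diff[OF assms(1,2)] by simp
qed

lemma induced_forest_iff_hub_spanning_tree:
  assumes "simple_graph V E" "v0 \<notin> V" "W \<subseteq> V"
  defines "E0 \<equiv> {{v, v0} | v. v \<in> V}"
  shows "is_forest W (induced_edges E W) \<longleftrightarrow>
    (\<exists>X0. X0 \<subseteq> E0 \<and> (\<forall>e\<in>X0. e \<subseteq> insert v0 W) \<and>
       graph_connected (insert v0 W) (induced_edges (E \<union> E0) W \<union> X0) \<and>
       card (induced_edges (E \<union> E0) W \<union> X0) = card (insert v0 W) - 1)"
proof -
  have W: "finite W" "v0 \<notin> W"
    using assms(1-3) finite_subset unfolding simple_graph_def by auto
  have induced: "induced_edges (E \<union> E0) W = induced_edges E W"
    using assms(2,3) by (auto simp: induced_edges_def E0_def)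
  have card: "card (insert v0 W) - 1 = card W" using W by simp
  have star: "X0 \<subseteq> E0 \<and> (\<forall>e\<in>X0. e \<subseteq> insert v0 W) \<and> P \<longleftrightarrow> X0 \<subseteq> star v0 W \<and> P"
    for X0 P
  proof -
    have "e \<in> E0 \<and> e \<subseteq> insert v0 W \<longleftrightarrow> e \<in> star v0 W" for e
      using assms(2,3) by (auto simp: E0_def star_def)
    then show ?thesis by blast
  qed
  show ?thesis
    unfolding is_forest_iff_star_spanning_tree[OF simple_graph_induced_edges[OF assms(1,3)] W(2)]
      induced card star ..
qed

theorem lemma4:
  fixes V :: "'a set" and E :: "'a set set" and c :: "'a \<Rightarrow> nat set"
    and t :: nat and k :: "nat \<Rightarrow> nat" and v0 :: 'a
  assumes G: "simple_graph V E"
    and col: "t_colouring V t c"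
    and v0: "v0 \<notin> V"
  defines "E0 \<equiv> {{v, v0} | v. v \<in> V}"
  defines "E' \<equiv> E \<union> E0"
  defines "c' \<equiv> c(v0 := {1..t})"
  shows "(\<exists>F. fair_fvs V E c t k F) \<longleftrightarrow>
    (\<exists>X X0. X \<subseteq> V \<union> {v0} \<and> v0 \<in> X \<and> X0 \<subseteq> E0 \<and>
       (\<forall>e\<in>X0. e \<subseteq> X) \<and>
       graph_connected X (induced_edges E' (X - {v0}) \<union> X0) \<and>
       card (induced_edges E' (X - {v0}) \<union> X0) = card X - 1 \<and>
       (\<forall>i\<in>{1..t}. int (ccount c' i X) = int (ccount c i V) - int (k i) + 1))"
proof -
  have "finite V" using G by (simp add: simple_graph_def)
  have reindexed: "X \<subseteq> V \<union> {v0} \<and> v0 \<in> X \<and> fair_fvs V E c t k (V - (X - {v0})) \<longleftrightarrow>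
      (\<exists>X0. X \<subseteq> V \<union> {v0} \<and> v0 \<in> X \<and> X0 \<subseteq> E0 \<and> (\<forall>e\<in>X0. e \<subseteq> X) \<and>
         graph_connected X (induced_edges E' (X - {v0}) \<union> X0) \<and>
         card (induced_edges E' (X - {v0}) \<union> X0) = card X - 1 \<and>
         (\<forall>i\<in>{1..t}. int (ccount c' i X) = int (ccount c i V) - int (k i) + 1))"
    (is "?fair X \<longleftrightarrow> ?tree X") for X
  proof (cases "X \<subseteq> V \<union> {v0} \<and> v0 \<in> X")
    case True
    then obtain W where W: "W \<subseteq> V" "X = insert v0 W" "X - {v0} = W" using v0 by blast
    note tree = induced_forest_iff_hub_spanning_tree[OF G v0 W(1), folded E0_def E'_def W(2)]
    have colours: "(\<forall>i\<in>{1..t}. ccount c i (V - W) = k i) \<longleftrightarrow>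
        (\<forall>i\<in>{1..t}. int (ccount c' i X) = int (ccount c i V) - int (k i) + 1)"
      using ccount_complement_iff[OF \<open>finite V\<close> W(1) v0, where c = c and t = t, folded c'_def W(2)]
      by simp
    have "fair_fvs V E c t k (V - W) \<longleftrightarrow>
        is_forest W (induced_edges E W) \<and> (\<forall>i\<in>{1..t}. ccount c i (V - W) = k i)"
      using W(1) by (simp add: fair_fvs_def double_diff)
    then show ?thesis unfolding W(3) tree colours using True by blast
  qed blast
  have "(\<exists>F. fair_fvs V E c t k F) \<longleftrightarrow> (\<exists>X. ?fair X)"
  proof
    assume "\<exists>F. fair_fvs V E c t k F"
    then obtain F where F: "fair_fvs V E c t k F" ..
    then have "V - (insert v0 (V - F) - {v0}) = F" using v0 by (auto simp: fair_fvs_def)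
    with F show "\<exists>X. ?fair X" by (intro exI[of _ "insert v0 (V - F)"]) auto
  qed blast
  also have "\<dots> \<longleftrightarrow> (\<exists>X. ?tree X)" by (simp only: reindexed)
  finally show ?thesis .
qed

end
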